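(* Under the parameter assumptions in the context, the reduced system $\dot x=G(x)$ is strongly monotone on the open orthant $(0,\infty)^4$ with respect to the partial order induced by the orthant cone $C_\sigma=\{x\in\mathbb{R}^4:\sigma_ix_i\ge0\ \forall i\}$ with $\sigma=(-1,1,-1,1)$; that is, for all $t>0$ and all $x_1,x_2\in(0,\infty)^4$ with $x_1-x_2\in C_\sigma$ and $x_1\ne x_2$, one has $\phi_t(x_1)-\phi_t(x_2)\in \mathrm{int}(C_\sigma)$, where $\phi_t$ is the flow of the reduced system.
   Context: All of the following are positive real parameters: $A_s, A_z, E_{34}, E_{200}, E_S, E_Z, \beta_{34}, \beta_{-34}, \beta_{200}, \beta_{-200}, \gamma_s, \gamma_z, c_s, c_{-s}, c_z, c_{-z}, \beta_s, \beta_{s1}, \beta_{s2}, \beta_z, \beta_{z1}, \beta_{z2}, k_s, k_{s1}, k_{s2}, k_{-s}, k_z, k_{z1}, k_{z2}, k_{-z}, \delta_z$. They satisfy $\beta_s<\beta_{s1}<\beta_{s2}$, $\beta_z<\beta_{z1}<\beta_{z2}$, $k_s>k_{s1}>k_{s2}$ and $k_z>k_{z1}>k_{z2}$. For $\rho\in\{s,z\}$ define $e_{\rho1}=\beta_{\rho1}\beta_{\rho2}+(\beta_{\rho1}+\beta_{\rho2})c_{-\rho}+c_{-\rho}^2$, $e_{\rho2}=c_\rho(\beta_{\rho2}+c_{-\rho})$, $e_{\rho3}=\beta_\rho\beta_{\rho2}+\beta_{\rho1}\beta_{\rho2}+\beta_{\rho1}c_{-\rho}$, $\Delta_\rho(\mu)=\beta_{\rho2}c_\rho^2\mu^2+e_{\rho3}c_\rho\mu+e_{\rho1}\beta_\rho$,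 and $N_\rho(\mu)=\dfrac{k_\rho(\beta_{\rho2}c_\rho\mu+e_{\rho1})+k_{\rho1}e_{\rho2}\mu+k_{\rho2}c_\rho^2\mu^2}{\Delta_\rho(\mu)}$ for $\mu\ge 0$. The reduced system $\dot x=G(x)$, $x=(\mu_{34},s,\mu_{200},z)$, is $\dot\mu_{34}=\dfrac{\beta_{34}E_{34}A_sA_z}{(s^2+A_s)(z^2+A_z)}-\beta_{-34}\mu_{34}$, $\dot s=\dfrac{\gamma_sE_SA_s}{s^2+A_s}N_s(\mu_{34})-k_{-s}s$, $\dot\mu_{200}=\dfrac{\beta_{200}E_{200}A_sA_z}{(s^2+A_s)(z^2+A_z)}-\beta_{-200}\mu_{200}$, $\dot z=\delta_z+\dfrac{\gamma_zE_Zs^2z^2}{(s^2+A_s)(z^2+A_z)}N_z(\mu_{200})-k_{-z}z$. *)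

theory Defs
  imports "HOL-Analysis.Analysis"
begin

text \<open>Parameters of the model (all 31 positive reals of the paper).
  Naming: b = beta, bm = beta with negative index, g = gamma, cm = c_{-rho},
  km = k_{-rho}, dz = delta_z.\<close>

record params =
  As :: real  Az :: real  E34 :: real  E200 :: real  ES :: real  EZ :: real
  b34 :: real  bm34 :: real  b200 :: real  bm200 :: real  gs :: real  gz :: real
  cs :: real  cms :: real  cz :: real  cmz :: real
  bs :: real  bs1 :: real  bs2 :: real  bz :: real  bz1 :: real  bz2 :: real
  ks :: real  ks1 :: real  ks2 :: real  kms :: real
  kz :: real  kz1 :: real  kz2 :: real  kmz :: real  dz :: real

text \<open>Generic formulas for rho in {s,z}: arguments are
  k_rho, k_rho1, k_rho2, c_rho, c_{-rho}, beta_rho, beta_rho1, beta_rho2.\<close>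


definition e_1 :: "real \<Rightarrow> real \<Rightarrow> real \<Rightarrow> real" where
  "e_1 cm b1 b2 = b1 * b2 + (b1 + b2) * cm + cm\<^sup>2"

definition e_2 :: "real \<Rightarrow> real \<Rightarrow> real \<Rightarrow> real" where
  "e_2 c cm b2 = c * (b2 + cm)"

definition e_3 :: "real \<Rightarrow> real \<Rightarrow> real \<Rightarrow> real \<Rightarrow> real" where
  "e_3 cm b b1 b2 = b * b2 + b1 * b2 + b1 * cm"

definition Delta :: "real \<Rightarrow> real \<Rightarrow> real \<Rightarrow> real \<Rightarrow> real \<Rightarrow> real \<Rightarrow> real" where
  "Delta c cm b b1 b2 \<mu> = b2 * c\<^sup>2 * \<mu>\<^sup>2 + e_3 cm b b1 b2 * c * \<mu> + e_1 cm b1 b2 * b"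

definition Nf :: "real \<Rightarrow> real \<Rightarrow> real \<Rightarrow> real \<Rightarrow> real \<Rightarrow> real \<Rightarrow> real \<Rightarrow> real \<Rightarrow> real \<Rightarrow> real" where
  "Nf k k1 k2 c cm b b1 b2 \<mu> =
     (k * (b2 * c * \<mu> + e_1 cm b1 b2) + k1 * e_2 c cm b2 * \<mu> + k2 * c\<^sup>2 * \<mu>\<^sup>2)
     / Delta c cm b b1 b2 \<mu>"

definition N_s :: "params \<Rightarrow> real \<Rightarrow> real" where
  "N_s p = Nf (ks p) (ks1 p) (ks2 p) (cs p) (cms p) (bs p) (bs1 p) (bs2 p)"

definition N_z :: "params \<Rightarrow> real \<Rightarrow> real" where
  "N_z p = Nf (kz p) (kz1 p) (kz2 p) (cz p) (cmz p) (bz p) (bz1 p) (bz2 p)"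

definition G :: "params \<Rightarrow> real^4 \<Rightarrow> real^4" where
  "G p x = (let m34 = x$1; s = x$2; m200 = x$3; z = x$4 in
     (\<chi> i. if i = 1 then
              b34 p * E34 p * As p * Az p / ((s\<^sup>2 + As p) * (z\<^sup>2 + Az p)) - bm34 p * m34
            else if i = 2 then
              gs p * ES p * As p / (s\<^sup>2 + As p) * N_s p m34 - kms p * s
            else if i = 3 then
              b200 p * E200 p * As p * Az p / ((s\<^sup>2 + As p) * (z\<^sup>2 + Az p)) - bm200 p * m200
            else
              dz p + gz p * EZ p * s\<^sup>2 * z\<^sup>2 / ((s\<^sup>2 + As p) * (z\<^sup>2 + Az p)) * N_z p m200
                - kmz p * z))"

definition sigma :: "real^4" where
  "sigma = (\<chi> i. if i = 1 \<or> i = 3 then -1 else 1)"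

definition C_sigma :: "(real^4) set" where
  "C_sigma = {x. \<forall>i. sigma$i * x$i \<ge> 0}"

definition open_orthant :: "(real^4) set" where
  "open_orthant = {x. \<forall>i. x$i > 0}"

end

theory Submission
  imports Defs
begin

text \<open>After the change of coordinates \<open>x \<mapsto> \<sigma> x\<close> the reduced system is cooperative: the
  Hill terms are monotone, and the ordering hypotheses on the \<open>\<beta>\<close>'s and \<open>k\<close>'s make
  \<open>N\<^sub>s\<close> and \<open>N\<^sub>z\<close> strictly decreasing. Both solutions stay in the open orthant and in a
  compact box, on which \<open>G\<close> is Lipschitz, so Kamke's argument shows that the
  \<open>\<sigma>\<close>-weighted difference \<open>w\<close> of two ordered solutions stays in the closed positive orthant,
  and that a positive coordinate of \<open>w\<close> stays positive. Each coordinate strictly drives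
  the next one along the cycle \<open>\<mu>\<^sub>3\<^sub>4 \<rightarrow> s \<rightarrow> \<mu>\<^sub>2\<^sub>0\<^sub>0 \<rightarrow> z \<rightarrow> \<mu>\<^sub>3\<^sub>4\<close>, so positivity spreads
  from a coordinate in which the initial data differ to the next one within any positive
  time, and after three such steps every coordinate of \<open>w(t)\<close> is positive.\<close>

section \<open>Kinetic and Hill functions\<close>

lemma e_1_pos: "0 < cm \<Longrightarrow> 0 < b1 \<Longrightarrow> 0 < b2 \<Longrightarrow> 0 < e_1 cm b1 b2"
  unfolding e_1_def by (intro add_pos_pos mult_pos_pos) auto

lemma Delta_ge:
  assumes "0 < c" "0 < cm" "0 < b" "0 < b1" "0 < b2" "0 \<le> \<mu>"
  shows "e_1 cm b1 b2 * b \<le> Delta c cm b b1 b2 \<mu>"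
  using assms unfolding Delta_def e_3_def by (simp add: add_nonneg_nonneg)

lemma Delta_pos:
  assumes "0 < c" "0 < cm" "0 < b" "0 < b1" "0 < b2" "0 \<le> \<mu>"
  shows "0 < Delta c cm b b1 b2 \<mu>"
  using Delta_ge[OF assms] e_1_pos assms by (smt (verit) mult_pos_pos)

lemma Nf_pos:
  assumes "0 < c" "0 < cm" "0 < b" "0 < b1" "0 < b2" "0 \<le> \<mu>" "0 < k" "0 < k1" "0 < k2"
  shows "0 < Nf k k1 k2 c cm b b1 b2 \<mu>"
proof -
  have "0 < k * (b2 * c * \<mu> + e_1 cm b1 b2)"
    using assms e_1_pos by (intro mult_pos_pos add_nonneg_pos) auto
  then have "0 < k * (b2 * c * \<mu> + e_1 cm b1 b2) + k1 * e_2 c cm b2 * \<mu> + k2 * c\<^sup>2 * \<mu>\<^sup>2"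
    using assms unfolding e_2_def by (intro add_pos_nonneg) auto
  then show ?thesis
    unfolding Nf_def using Delta_pos[OF assms(1-6)] by simp
qed

text \<open>Cross-multiplying, the sign of \<open>N(\<mu>) - N(\<nu>)\<close> is that of
  \<open>(\<nu> - \<mu>) (A + B (\<mu> + \<nu>) + C \<mu> \<nu>)\<close>, and the orderings of the
  \<open>\<beta>\<close>'s and \<open>k\<close>'s make \<open>A\<close>, \<open>B\<close>, \<open>C\<close> positive.\<close>
lemma Nf_strict_antimono:
  assumes "0 < c" "0 < cm" "0 < b" "0 < k2"
    and "b < b1" "b1 < b2" "k2 < k1" "k1 < k" and "0 \<le> \<mu>" "\<mu> < \<nu>"
  shows "Nf k k1 k2 c cm b b1 b2 \<nu> < Nf k k1 k2 c cm b b1 b2 \<mu>"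
proof -
  define e1 where "e1 = e_1 cm b1 b2"
  define P where "P \<mu> = k * (b2 * c * \<mu> + e1) + k1 * e_2 c cm b2 * \<mu> + k2 * c\<^sup>2 * \<mu>\<^sup>2" for \<mu>
  define A where "A = e1 * c * (b2 + cm) * (k * b1 - k1 * b)"
  define B where "B = e1 * c\<^sup>2 * (k * b2 - k2 * b)"
  define C where "C = c ^ 3 * ((k * b2 - k2 * b) * b2 + (k1 * b2 - k2 * b1) * (b2 + cm))"
  have cross: "P \<mu> * Delta c cm b b1 b2 \<nu> - P \<nu> * Delta c cm b b1 b2 \<mu>
      = (\<nu> - \<mu>) * (A + B * (\<nu> + \<mu>) + C * \<mu> * \<nu>)"
    unfolding P_def A_def B_def C_def Delta_def e1_def e_2_def e_3_def
    by (simp add: power2_eq_square power3_eq_cube) algebra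
  have "0 < e1" using assms by (simp add: e1_def e_1_pos)
  moreover have "k1 * b < k * b1" "k2 * b < k * b2" "k2 * b1 < k1 * b2"
    using assms by (auto intro: mult_strict_mono)
  ultimately have "0 < A" "0 < B" "0 < C"
    using assms unfolding A_def B_def C_def by (auto intro!: mult_pos_pos add_pos_pos)
  then have "0 < A + B * (\<nu> + \<mu>) + C * \<mu> * \<nu>"
    using assms by (intro add_pos_nonneg) auto
  then have "P \<nu> * Delta c cm b b1 b2 \<mu> < P \<mu> * Delta c cm b b1 b2 \<nu>"
    using cross assms by (smt (verit) mult_pos_pos)
  moreover have "0 < Delta c cm b b1 b2 \<mu>" "0 < Delta c cm b b1 b2 \<nu>"
    using assms by (auto intro!: Delta_pos)
  ultimately show ?thesis
    by (simp add: Nf_def flip: P_def e1_def) (simp add: field_simps mult.commute)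
qed

definition hill_repression :: "real \<Rightarrow> real \<Rightarrow> real" where
  "hill_repression A a = A / (a\<^sup>2 + A)"

definition hill_activation :: "real \<Rightarrow> real \<Rightarrow> real" where
  "hill_activation A a = a\<^sup>2 / (a\<^sup>2 + A)"

lemma hill_activation_eq:
  assumes "0 < A"
  shows "hill_activation A a = 1 - hill_repression A a"
proof -
  have "a\<^sup>2 + A \<noteq> 0"
    using assms by (metis add_nonneg_pos zero_le_power2 less_irrefl)
  then show ?thesis
    unfolding hill_activation_def hill_repression_def by (simp add: field_simps)
qed

lemma hill_repression_pos: "0 < A \<Longrightarrow> 0 < hill_repression A a"
  unfolding hill_repression_def by (simp add: add_nonneg_pos)

lemma hill_repression_antimono:
  "0 < A \<Longrightarrow> 0 \<le> a \<Longrightarrow> a \<le> a' \<Longrightarrow> hill_repression A a' \<le> hill_repression A a"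
  unfolding hill_repression_def
  by (intro divide_left_mono add_right_mono power_mono mult_pos_pos add_nonneg_pos) auto

lemma hill_repression_strict_antimono:
  "0 < A \<Longrightarrow> 0 \<le> a \<Longrightarrow> a < a' \<Longrightarrow> hill_repression A a' < hill_repression A a"
  unfolding hill_repression_def
  by (intro divide_strict_left_mono add_strict_right_mono power_strict_mono mult_pos_pos
      add_nonneg_pos) auto

lemma hill_activation_nonneg: "0 < A \<Longrightarrow> 0 \<le> hill_activation A a"
  unfolding hill_activation_def by (simp add: add_nonneg_pos)

lemma hill_activation_pos: "0 < A \<Longrightarrow> a \<noteq> 0 \<Longrightarrow> 0 < hill_activation A a"
  unfolding hill_activation_def by (simp add: add_nonneg_pos)

lemma hill_activation_mono:
  "0 < A \<Longrightarrow> 0 \<le> a \<Longrightarrow> a \<le> a' \<Longrightarrow> hill_activation A a \<le> hill_activation A a'"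
  using hill_repression_antimono by (simp add: hill_activation_eq)

section \<open>Functions that are bounded and Lipschitz\<close>

definition bounded_lipschitz_on :: "'a::metric_space set \<Rightarrow> ('a \<Rightarrow> real) \<Rightarrow> bool" where
  "bounded_lipschitz_on S f \<longleftrightarrow> bounded (f ` S) \<and> (\<exists>L. L-lipschitz_on S f)"

lemma bounded_lipschitz_onE:
  assumes "bounded_lipschitz_on S f"
  obtains M L where "0 < M" "\<And>x. x \<in> S \<Longrightarrow> \<bar>f x\<bar> \<le> M" "L-lipschitz_on S f"
  using assms unfolding bounded_lipschitz_on_def bounded_pos by auto

lemma bounded_lipschitz_on_const: "bounded_lipschitz_on S (\<lambda>x. c)"
  unfolding bounded_lipschitz_on_def
  by (auto intro: lipschitz_on_constant bounded_subset[of "{c}"])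

lemma bounded_lipschitz_on_component:
  fixes S :: "(real^'n) set"
  assumes "bounded S"
  shows "bounded_lipschitz_on S (\<lambda>x. x $ j)"
proof -
  have "bounded ((\<lambda>x. x $ j) ` S)"
    using assms by (auto simp: bounded_iff intro: order_trans[OF component_le_norm_cart])
  moreover have "1-lipschitz_on S (\<lambda>x. x $ j)"
    by (rule lipschitz_onI) (auto simp: dist_vec_nth_le)
  ultimately show ?thesis
    unfolding bounded_lipschitz_on_def by blast
qed

lemma bounded_lipschitz_on_add:
  "bounded_lipschitz_on S f \<Longrightarrow> bounded_lipschitz_on S g \<Longrightarrow> bounded_lipschitz_on S (\<lambda>x. f x + g x)"
  unfolding bounded_lipschitz_on_def by (blast intro: bounded_plus_comp lipschitz_on_add)

lemma bounded_lipschitz_on_diff: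
  "bounded_lipschitz_on S f \<Longrightarrow> bounded_lipschitz_on S g \<Longrightarrow> bounded_lipschitz_on S (\<lambda>x. f x - g x)"
  unfolding bounded_lipschitz_on_def by (blast intro: bounded_minus_comp lipschitz_on_diff)

lemma bounded_lipschitz_on_mult:
  assumes "bounded_lipschitz_on S f" "bounded_lipschitz_on S g"
  shows "bounded_lipschitz_on S (\<lambda>x. f x * g x)"
proof -
  obtain Mf Lf where f: "0 < Mf" "\<And>x. x \<in> S \<Longrightarrow> \<bar>f x\<bar> \<le> Mf" "Lf-lipschitz_on S f"
    using assms(1) by (rule bounded_lipschitz_onE) blast
  obtain Mg Lg where g: "0 < Mg" "\<And>x. x \<in> S \<Longrightarrow> \<bar>g x\<bar> \<le> Mg" "Lg-lipschitz_on S g"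
    using assms(2) by (rule bounded_lipschitz_onE) blast
  have "bounded ((\<lambda>x. f x * g x) ` S)"
    using f g by (auto simp: bounded_iff abs_mult intro!: exI[of _ "Mf * Mg"] mult_mono)
  moreover have "(Mf * Lg + Mg * Lf)-lipschitz_on S (\<lambda>x. f x * g x)"
  proof (rule lipschitz_onI)
    fix x y assume xy: "x \<in> S" "y \<in> S"
    have "dist (f x * g x) (f y * g y) = \<bar>f x * (g x - g y) + g y * (f x - f y)\<bar>"
      by (simp add: dist_real_def algebra_simps)
    also have "\<dots> \<le> \<bar>f x\<bar> * \<bar>g x - g y\<bar> + \<bar>g y\<bar> * \<bar>f x - f y\<bar>"
      by (metis abs_mult abs_triangle_ineq)
    also have "\<dots> \<le> Mf * (Lg * dist x y) + Mg * (Lf * dist x y)"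
      using xy f g lipschitz_onD[OF f(3)] lipschitz_onD[OF g(3)]
      by (intro add_mono mult_mono) (auto simp: dist_real_def)
    finally show "dist (f x * g x) (f y * g y) \<le> (Mf * Lg + Mg * Lf) * dist x y"
      by (simp add: algebra_simps)
  qed (use f g lipschitz_on_nonneg[OF f(3)] lipschitz_on_nonneg[OF g(3)] in simp)
  ultimately show ?thesis
    unfolding bounded_lipschitz_on_def by blast
qed

lemma bounded_lipschitz_on_power:
  "bounded_lipschitz_on S f \<Longrightarrow> bounded_lipschitz_on S (\<lambda>x. f x ^ n)"
  by (induction n) (auto intro: bounded_lipschitz_on_const bounded_lipschitz_on_mult)

lemma bounded_lipschitz_on_inverse:
  assumes "bounded_lipschitz_on S f" "0 < c" "\<And>x. x \<in> S \<Longrightarrow> c \<le> f x"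
  shows "bounded_lipschitz_on S (\<lambda>x. 1 / f x)"
proof -
  obtain L where f: "L-lipschitz_on S f"
    using assms(1) unfolding bounded_lipschitz_on_def by blast
  have "\<bar>1 / f x\<bar> \<le> 1 / c" if "x \<in> S" for x
    using assms(2) assms(3)[OF that] by (simp add: frac_le)
  then have "bounded ((\<lambda>x. 1 / f x) ` S)"
    by (auto simp: bounded_iff)
  moreover have "(L / c\<^sup>2)-lipschitz_on S (\<lambda>x. 1 / f x)"
  proof (rule lipschitz_onI)
    fix x y assume xy: "x \<in> S" "y \<in> S"
    then have "c \<le> f x" "c \<le> f y" using assms(3) by auto
    then have "dist (1 / f x) (1 / f y) = \<bar>f x - f y\<bar> / (f x * f y)"
      using assms(2) by (simp add: dist_real_def field_simps abs_div abs_minus_commute)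
    also have "\<dots> \<le> \<bar>f x - f y\<bar> / c\<^sup>2"
      using \<open>c \<le> f x\<close> \<open>c \<le> f y\<close> assms(2)
      by (intro divide_left_mono) (auto simp: power2_eq_square intro: mult_mono)
    also have "\<dots> \<le> L * dist x y / c\<^sup>2"
      using lipschitz_onD[OF f xy] by (intro divide_right_mono) (auto simp: dist_real_def)
    finally show "dist (1 / f x) (1 / f y) \<le> L / c\<^sup>2 * dist x y" by simp
  qed (use lipschitz_on_nonneg[OF f] in simp)
  ultimately show ?thesis
    unfolding bounded_lipschitz_on_def by blast
qed

lemma bounded_lipschitz_on_divide:
  assumes "bounded_lipschitz_on S g" "bounded_lipschitz_on S f"
    and "0 < c" "\<And>x. x \<in> S \<Longrightarrow> c \<le> f x"
  shows "bounded_lipschitz_on S (\<lambda>x. g x / f x)"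
  using bounded_lipschitz_on_mult[OF assms(1) bounded_lipschitz_on_inverse[OF assms(2-4)]]
  by simp

lemma lipschitz_on_componentwise:
  fixes f :: "'a::metric_space \<Rightarrow> real^'n"
  assumes "\<And>i. (L i)-lipschitz_on S (\<lambda>x. f x $ i)"
  shows "(\<Sum>i\<in>UNIV. L i)-lipschitz_on S f"
proof (rule lipschitz_onI)
  fix x y assume xy: "x \<in> S" "y \<in> S"
  have "dist (f x) (f y) \<le> (\<Sum>i\<in>UNIV. \<bar>f x $ i - f y $ i\<bar>)"
    using norm_le_l1_cart[of "f x - f y"] by (simp add: dist_norm)
  also have "\<dots> \<le> (\<Sum>i\<in>UNIV. L i * dist x y)"
    using lipschitz_onD[OF assms xy] by (intro sum_mono) (simp add: dist_real_def)
  finally show "dist (f x) (f y) \<le> (\<Sum>i\<in>UNIV. L i) * dist x y"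
    by (simp add: sum_distrib_right)
qed (use assms lipschitz_on_nonneg in \<open>blast intro: sum_nonneg\<close>)

lemma bounded_lipschitz_on_hill_repression:
  assumes "bounded_lipschitz_on S f" "0 < A"
  shows "bounded_lipschitz_on S (\<lambda>x. hill_repression A (f x))"
  unfolding hill_repression_def using assms
  by (intro bounded_lipschitz_on_divide[where c = A] bounded_lipschitz_on_add
      bounded_lipschitz_on_power bounded_lipschitz_on_const) auto

lemma bounded_lipschitz_on_hill_activation:
  assumes "bounded_lipschitz_on S f" "0 < A"
  shows "bounded_lipschitz_on S (\<lambda>x. hill_activation A (f x))"
  using assms by (simp add: hill_activation_eq bounded_lipschitz_on_diff
      bounded_lipschitz_on_const bounded_lipschitz_on_hill_repression)

lemma bounded_lipschitz_on_Nf: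
  assumes "bounded_lipschitz_on S f" "\<And>x. x \<in> S \<Longrightarrow> 0 \<le> f x"
    and "0 < c" "0 < cm" "0 < b" "0 < b1" "0 < b2"
  shows "bounded_lipschitz_on S (\<lambda>x. Nf k k1 k2 c cm b b1 b2 (f x))"
  unfolding Nf_def Delta_def[symmetric]
proof (rule bounded_lipschitz_on_divide[where c = "e_1 cm b1 b2 * b"])
  show "bounded_lipschitz_on S (\<lambda>x. Delta c cm b b1 b2 (f x))"
    unfolding Delta_def using assms(1)
    by (intro bounded_lipschitz_on_add bounded_lipschitz_on_mult bounded_lipschitz_on_power
        bounded_lipschitz_on_const)
  show "e_1 cm b1 b2 * b \<le> Delta c cm b b1 b2 (f x)" if "x \<in> S" for x
    using assms Delta_ge that by blast
  show "bounded_lipschitz_on S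
      (\<lambda>x. k * (b2 * c * f x + e_1 cm b1 b2) + k1 * e_2 c cm b2 * f x + k2 * c\<^sup>2 * (f x)\<^sup>2)"
    using assms(1)
    by (intro bounded_lipschitz_on_add bounded_lipschitz_on_mult bounded_lipschitz_on_power
        bounded_lipschitz_on_const)
qed (use assms e_1_pos in simp)

section \<open>Linear differential inequalities\<close>

lemma has_real_derivative_component:
  assumes "(y has_vector_derivative v) (at \<tau> within S)"
  shows "((\<lambda>\<tau>. y \<tau> $ j) has_real_derivative v $ j) (at \<tau> within S)"
  using bounded_linear.has_vector_derivative[OF bounded_linear_vec_nth assms, of j]
  by (simp add: has_real_derivative_iff_has_vector_derivative)

lemma differential_inequality_exp_lower_bound:
  fixes u u' :: "real \<Rightarrow> real"
  assumes "a \<le> b"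
    and deriv: "\<And>x. x \<in> {a..b} \<Longrightarrow> (u has_real_derivative u' x) (at x within {a..b})"
    and ineq: "\<And>x. x \<in> {a..b} \<Longrightarrow> - c * u x \<le> u' x"
  shows "exp (- c * (b - a)) * u a \<le> u b"
proof -
  define v where "v x = exp (c * (x - a)) * u x" for x
  have "continuous_on {a..b} u"
    using deriv DERIV_continuous continuous_on_eq_continuous_within by blast
  then have "continuous_on {a..b} v"
    unfolding v_def by (intro continuous_intros)
  then have "v a \<le> v b"
  proof (rule DERIV_nonneg_imp_increasing_open[OF \<open>a \<le> b\<close>, rotated])
    fix x assume x: "a < x" "x < b"
    then have "(u has_real_derivative u' x) (at x)"
      using deriv[of x] by (simp add: at_within_Icc_at)
    then have "(v has_real_derivative exp (c * (x - a)) * (c * u x + u' x)) (at x)"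
      unfolding v_def by (auto intro!: derivative_eq_intros simp: algebra_simps)
    moreover have "0 \<le> exp (c * (x - a)) * (c * u x + u' x)"
      using ineq[of x] x by simp
    ultimately show "\<exists>y. (v has_real_derivative y) (at x) \<and> 0 \<le> y" by blast
  qed
  then have "exp (- c * (b - a)) * u a \<le> exp (- c * (b - a)) * (exp (c * (b - a)) * u b)"
    by (simp add: v_def)
  also have "\<dots> = u b"
    by (simp add: mult.assoc[symmetric] flip: exp_add)
  finally show ?thesis .
qed

lemma has_real_derivative_min_0_square:
  "((\<lambda>x::real. (min 0 x)\<^sup>2) has_real_derivative 2 * min 0 x) (at x)"
proof -
  consider "x < 0" | "0 < x" | "x = 0" by linarith
  then show ?thesis
  proof cases
    case 1
    have "((\<lambda>x::real. x\<^sup>2) has_real_derivative 2 * x) (at x)"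
      by (auto intro!: derivative_eq_intros)
    then have "((\<lambda>x::real. (min 0 x)\<^sup>2) has_real_derivative 2 * x) (at x)"
      by (rule has_field_derivative_transform_within_open[of _ _ _ "{..<0}"]) (use 1 in auto)
    then show ?thesis
      using 1 by simp
  next
    case 2
    have "((\<lambda>x::real. 0) has_real_derivative 0) (at x)"
      by simp
    then have "((\<lambda>x::real. (min 0 x)\<^sup>2) has_real_derivative 0) (at x)"
      by (rule has_field_derivative_transform_within_open[of _ _ _ "{0<..}"]) (use 2 in auto)
    then show ?thesis
      using 2 by simp
  next
    case 3
    have "((\<lambda>y::real. (min 0 y)\<^sup>2 / y) \<longlongrightarrow> 0) (at 0)"
    proof (rule Lim_null_comparison)
      show "\<forall>\<^sub>F y in at 0. norm ((min 0 y)\<^sup>2 / y) \<le> \<bar>y\<bar>"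
        by (auto simp: abs_div power2_eq_square abs_mult min_def divide_simps)
      show "((\<lambda>y::real. \<bar>y\<bar>) \<longlongrightarrow> 0) (at 0)"
        by (auto intro!: tendsto_eq_intros)
    qed
    then show ?thesis
      using 3 by (simp add: has_field_derivative_iff)
  qed
qed

text \<open>The squared distance \<open>V = \<Sum>j. (min 0 w\<^sub>j)\<^sup>2\<close> to the orthant satisfies
  \<open>V' \<le> C V\<close> by quasimonotonicity, so it stays \<open>0\<close>.\<close>
lemma quasimonotone_differential_inequality_nonneg:
  fixes w w' :: "real \<Rightarrow> 'i::finite \<Rightarrow> real"
  assumes deriv: "\<And>\<tau> i. \<tau> \<in> {0..t} \<Longrightarrow> ((\<lambda>\<tau>. w \<tau> i) has_real_derivative w' \<tau> i) (at \<tau> within {0..t})"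
    and ineq: "\<And>\<tau> i. \<tau> \<in> {0..t} \<Longrightarrow> - L * (\<bar>w \<tau> i\<bar> + (\<Sum>j\<in>UNIV. max 0 (- w \<tau> j))) \<le> w' \<tau> i"
    and "0 \<le> L" and init: "\<And>i. 0 \<le> w 0 i" and \<tau>: "\<tau> \<in> {0..t}"
  shows "0 \<le> w \<tau> i"
proof -
  define V where "V \<tau> = (\<Sum>j\<in>UNIV. (min 0 (w \<tau> j))\<^sup>2)" for \<tau>
  define V' where "V' \<tau> = (\<Sum>j\<in>UNIV. 2 * min 0 (w \<tau> j) * w' \<tau> j)" for \<tau>
  define C where "C = 4 * L * CARD('i)"
  have V_deriv: "(V has_real_derivative V' x) (at x within {0..t})" if "x \<in> {0..t}" for x
    unfolding V_def V'_def
    using DERIV_chain'[OF deriv[OF that] has_real_derivative_min_0_square]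
    by (intro DERIV_sum) (simp add: mult.commute)
  have V'_le: "V' x \<le> C * V x" if x: "x \<in> {0..t}" for x
  proof -
    define n where "n j = max 0 (- w x j)" for j
    define S where "S = (\<Sum>j\<in>UNIV. n j)"
    have n_square: "(n j)\<^sup>2 = (min 0 (w x j))\<^sup>2" for j
      unfolding n_def by (cases "w x j \<le> 0") auto
    have n_le: "n j \<le> S" for j
      unfolding S_def by (rule member_le_sum) (auto simp: n_def)
    have "2 * min 0 (w x j) * w' x j \<le> 4 * L * S * n j" for j
    proof (cases "w x j < 0")
      case True
      have "- L * (\<bar>w x j\<bar> + S) \<le> w' x j"
        using ineq[OF x, of j] by (simp add: S_def n_def)
      moreover have "L * (\<bar>w x j\<bar> + S) \<le> L * (2 * S)"
        using True n_le[of j] \<open>0 \<le> L\<close> by (intro mult_left_mono) (auto simp: n_def)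
      ultimately have "- 2 * L * S \<le> w' x j"
        by linarith
      then have "w x j * w' x j \<le> w x j * (- 2 * L * S)"
        using True by (intro mult_left_mono_neg) auto
      then show ?thesis
        using True by (simp add: n_def algebra_simps)
    qed (use \<open>0 \<le> L\<close> n_le in \<open>simp add: n_def\<close>)
    then have "V' x \<le> (\<Sum>j\<in>UNIV. 4 * L * S * n j)"
      unfolding V'_def by (rule sum_mono)
    also have "\<dots> = 4 * L * S\<^sup>2"
      by (simp only: flip: sum_distrib_left S_def) (simp add: power2_eq_square)
    also have "\<dots> \<le> 4 * L * ((\<Sum>j\<in>UNIV. (n j)\<^sup>2) * CARD('i))"
      using \<open>0 \<le> L\<close> sum_squared_le_sum_of_squares[of n UNIV]
      by (simp add: S_def mult_left_mono)
    also have "\<dots> = C * V x"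
      by (simp add: C_def V_def n_square)
    finally show ?thesis .
  qed
  have "exp (- (- C) * (\<tau> - 0)) * - V 0 \<le> - V \<tau>"
    using \<tau> by (intro differential_inequality_exp_lower_bound[where u' = "\<lambda>x. - V' x"])
      (auto intro!: derivative_eq_intros DERIV_subset[OF V_deriv] V'_le)
  moreover have "V 0 = 0"
    using init by (simp add: V_def)
  ultimately have "V \<tau> = 0"
    by (simp add: V_def sum_nonneg order_antisym)
  then have "min 0 (w \<tau> i) = 0"
    by (simp add: V_def sum_nonneg_eq_0_iff)
  then show ?thesis
    by linarith
qed

lemma quasimonotone_differential_inequality_persistent:
  fixes w w' :: "real \<Rightarrow> 'i::finite \<Rightarrow> real"
  assumes deriv: "\<And>\<tau> i. \<tau> \<in> {0..t} \<Longrightarrow> ((\<lambda>\<tau>. w \<tau> i) has_real_derivative w' \<tau> i) (at \<tau> within {0..t})"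
    and ineq: "\<And>\<tau> i. \<tau> \<in> {0..t} \<Longrightarrow> - L * (\<bar>w \<tau> i\<bar> + (\<Sum>j\<in>UNIV. max 0 (- w \<tau> j))) \<le> w' \<tau> i"
    and "0 \<le> L" and init: "\<And>i. 0 \<le> w 0 i"
    and "\<tau>\<^sub>0 \<in> {0..t}" "0 < w \<tau>\<^sub>0 i" "\<tau> \<in> {\<tau>\<^sub>0..t}"
  shows "0 < w \<tau> i"
proof -
  have nonneg: "0 \<le> w x j" if "x \<in> {0..t}" for x j
    using quasimonotone_differential_inequality_nonneg[OF deriv ineq \<open>0 \<le> L\<close> init that] .
  have "exp (- L * (\<tau> - \<tau>\<^sub>0)) * w \<tau>\<^sub>0 i \<le> w \<tau> i"
  proof (rule differential_inequality_exp_lower_bound[where u' = "\<lambda>x. w' x i"])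
    fix x assume "x \<in> {\<tau>\<^sub>0..\<tau>}"
    then have x: "x \<in> {0..t}"
      using assms(5,7) by auto
    show "((\<lambda>\<tau>. w \<tau> i) has_real_derivative w' x i) (at x within {\<tau>\<^sub>0..\<tau>})"
      using assms(5,7) by (intro DERIV_subset[OF deriv[OF x]]) auto
    show "- L * w x i \<le> w' x i"
      using ineq[OF x, of i] nonneg[OF x] by simp
  qed (use assms in auto)
  moreover have "0 < exp (- L * (\<tau> - \<tau>\<^sub>0)) * w \<tau>\<^sub>0 i"
    using assms by simp
  ultimately show ?thesis by linarith
qed

lemma sigma_nth: "sigma $ 1 = -1" "sigma $ 2 = 1" "sigma $ 3 = -1" "sigma $ 4 = 1"
  by (simp_all add: sigma_def)

lemma abs_sigma: "\<bar>sigma $ i\<bar> = 1"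
  by (simp add: sigma_def)

lemma C_sigma_iff: "x \<in> C_sigma \<longleftrightarrow> x $ 1 \<le> 0 \<and> 0 \<le> x $ 2 \<and> x $ 3 \<le> 0 \<and> 0 \<le> x $ 4"
  unfolding C_sigma_def by (simp add: forall_4 sigma_nth)

lemma mem_interior_C_sigma:
  assumes "\<And>i. 0 < sigma$i * x$i"
  shows "x \<in> interior C_sigma"
proof -
  define U where "U = (\<Inter>i. {x::real^4. 0 < sigma$i * x$i})"
  have "open U"
    unfolding U_def by (intro open_INT ballI open_Collect_less continuous_intros) auto
  moreover have "U \<subseteq> C_sigma"
    unfolding U_def C_sigma_def by (auto intro: less_imp_le)
  ultimately have "U \<subseteq> interior C_sigma"
    by (rule interior_maximal[rotated])
  moreover have "x \<in> U"
    unfolding U_def using assms by simp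
  ultimately show ?thesis by blast
qed

section \<open>The reduced system\<close>

locale reduced_system =
  fixes p :: params
  assumes pos: "As p > 0" "Az p > 0" "E34 p > 0" "E200 p > 0" "ES p > 0" "EZ p > 0"
    "b34 p > 0" "bm34 p > 0" "b200 p > 0" "bm200 p > 0" "gs p > 0" "gz p > 0"
    "cs p > 0" "cms p > 0" "cz p > 0" "cmz p > 0"
    "bs p > 0" "bs1 p > 0" "bs2 p > 0" "bz p > 0" "bz1 p > 0" "bz2 p > 0"
    "ks p > 0" "ks1 p > 0" "ks2 p > 0" "kms p > 0"
    "kz p > 0" "kz1 p > 0" "kz2 p > 0" "kmz p > 0" "dz p > 0"
  and ord_s: "bs p < bs1 p" "bs1 p < bs2 p"
  and ord_z: "bz p < bz1 p" "bz1 p < bz2 p"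
  and ordk_s: "ks p > ks1 p" "ks1 p > ks2 p"
  and ordk_z: "kz p > kz1 p" "kz1 p > kz2 p"
begin

lemma G_nth:
  "G p x $ 1 = b34 p * E34 p * hill_repression (As p) (x$2) * hill_repression (Az p) (x$4)
     - bm34 p * x$1"
  "G p x $ 2 = gs p * ES p * hill_repression (As p) (x$2) * N_s p (x$1) - kms p * x$2"
  "G p x $ 3 = b200 p * E200 p * hill_repression (As p) (x$2) * hill_repression (Az p) (x$4)
     - bm200 p * x$3"
  "G p x $ 4 = dz p + gz p * EZ p * hill_activation (As p) (x$2) * hill_activation (Az p) (x$4)
     * N_z p (x$3) - kmz p * x$4"
  by (simp_all add: G_def Let_def hill_repression_def hill_activation_def)

lemma N_s_pos: "0 \<le> \<mu> \<Longrightarrow> 0 < N_s p \<mu>"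
  unfolding N_s_def using pos by (intro Nf_pos) auto

lemma N_z_pos: "0 \<le> \<mu> \<Longrightarrow> 0 < N_z p \<mu>"
  unfolding N_z_def using pos by (intro Nf_pos) auto

lemma N_s_strict_antimono: "0 \<le> \<mu> \<Longrightarrow> \<mu> < \<nu> \<Longrightarrow> N_s p \<nu> < N_s p \<mu>"
  unfolding N_s_def using pos ord_s ordk_s by (intro Nf_strict_antimono) auto

lemma N_z_strict_antimono: "0 \<le> \<mu> \<Longrightarrow> \<mu> < \<nu> \<Longrightarrow> N_z p \<nu> < N_z p \<mu>"
  unfolding N_z_def using pos ord_z ordk_z by (intro Nf_strict_antimono) auto

lemma N_s_antimono: "0 \<le> \<mu> \<Longrightarrow> \<mu> \<le> \<nu> \<Longrightarrow> N_s p \<nu> \<le> N_s p \<mu>"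
  using N_s_strict_antimono by (cases "\<mu> = \<nu>") (auto simp: less_eq_real_def)

lemma N_z_antimono: "0 \<le> \<mu> \<Longrightarrow> \<mu> \<le> \<nu> \<Longrightarrow> N_z p \<nu> \<le> N_z p \<mu>"
  using N_z_strict_antimono by (cases "\<mu> = \<nu>") (auto simp: less_eq_real_def)

lemma G_quasimonotone:
  assumes x: "\<And>j. 0 \<le> x$j" and y: "\<And>j. 0 \<le> y$j"
    and ord: "x - y \<in> C_sigma" and eq: "x$i = y$i"
  shows "0 \<le> sigma$i * (G p x $ i - G p y $ i)"
proof -
  have o: "x$1 \<le> y$1" "y$2 \<le> x$2" "x$3 \<le> y$3" "y$4 \<le> x$4"
    using ord by (simp_all add: C_sigma_iff)
  have rep: "hill_repression (As p) (x$2) * hill_repression (Az p) (x$4)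
      \<le> hill_repression (As p) (y$2) * hill_repression (Az p) (y$4)"
    using pos o y
    by (intro mult_mono hill_repression_antimono less_imp_le[OF hill_repression_pos]) auto
  have act: "hill_activation (As p) (y$2) * hill_activation (Az p) (y$4) * N_z p (y$3)
      \<le> hill_activation (As p) (x$2) * hill_activation (Az p) (x$4) * N_z p (x$3)"
    using pos o x y
    by (intro mult_mono hill_activation_mono hill_activation_nonneg N_z_antimono
        less_imp_le[OF N_z_pos] mult_nonneg_nonneg) auto
  consider "i = 1" | "i = 2" | "i = 3" | "i = 4"
    using exhaust_4 by blast
  then show ?thesis
  proof cases
    case 1
    have "b34 p * E34 p * (hill_repression (As p) (x$2) * hill_repression (Az p) (x$4))
        \<le> b34 p * E34 p * (hill_repression (As p) (y$2) * hill_repression (Az p) (y$4))"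
      using rep pos by (intro mult_left_mono) auto
    then show ?thesis
      using 1 eq by (simp add: G_nth sigma_nth mult.assoc)
  next
    case 2
    have "gs p * ES p * hill_repression (As p) (x$2) * N_s p (y$1)
        \<le> gs p * ES p * hill_repression (As p) (x$2) * N_s p (x$1)"
      using pos o x
      by (intro mult_left_mono N_s_antimono mult_nonneg_nonneg less_imp_le[OF hill_repression_pos])
        auto
    then show ?thesis
      using 2 eq by (simp add: G_nth sigma_nth)
  next
    case 3
    have "b200 p * E200 p * (hill_repression (As p) (x$2) * hill_repression (Az p) (x$4))
        \<le> b200 p * E200 p * (hill_repression (As p) (y$2) * hill_repression (Az p) (y$4))"
      using rep pos by (intro mult_left_mono) auto
    then show ?thesis
      using 3 eq by (simp add: G_nth sigma_nth mult.assoc)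
  next
    case 4
    have "gz p * EZ p * (hill_activation (As p) (y$2) * hill_activation (Az p) (y$4) * N_z p (y$3))
        \<le> gz p * EZ p * (hill_activation (As p) (x$2) * hill_activation (Az p) (x$4) * N_z p (x$3))"
      using act pos by (intro mult_left_mono) auto
    then show ?thesis
      using 4 eq by (simp add: G_nth sigma_nth mult.assoc)
  qed
qed

lemma G_strictly_quasimonotone:
  assumes x: "\<And>j. 0 < x$j" and y: "\<And>j. 0 < y$j"
    and ord: "x - y \<in> C_sigma" and eq: "x$i = y$i"
    and prev: "0 < sigma$(i - 1) * (x$(i - 1) - y$(i - 1))"
  shows "0 < sigma$i * (G p x $ i - G p y $ i)"
proof -
  have o: "x$1 \<le> y$1" "y$2 \<le> x$2" "x$3 \<le> y$3" "y$4 \<le> x$4"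
    using ord by (simp_all add: C_sigma_iff)
  have x': "0 \<le> x$j" and y': "0 \<le> y$j" for j
    using x y less_imp_le by blast+
  consider "i = 1" | "i = 2" | "i = 3" | "i = 4"
    using exhaust_4 by blast
  then show ?thesis
  proof cases
    case 1
    have "(1::4) - 1 = 4"
      by simp
    then have "y$4 < x$4"
      using prev 1 by (simp only:) (simp add: sigma_nth)
    then have "hill_repression (As p) (x$2) * hill_repression (Az p) (x$4)
        < hill_repression (As p) (y$2) * hill_repression (Az p) (y$4)"
      using pos o y' by (intro mult_le_less_imp_less hill_repression_antimono
          hill_repression_strict_antimono hill_repression_pos less_imp_le[OF hill_repression_pos]) auto
    then have "b34 p * E34 p * (hill_repression (As p) (x$2) * hill_repression (Az p) (x$4))
        < b34 p * E34 p * (hill_repression (As p) (y$2) * hill_repression (Az p) (y$4))"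
      using pos by (intro mult_strict_left_mono) auto
    then show ?thesis
      using 1 eq by (simp add: G_nth sigma_nth mult.assoc)
  next
    case 2
    then have "x$1 < y$1"
      using prev by (simp add: sigma_nth)
    then have "gs p * ES p * hill_repression (As p) (x$2) * N_s p (y$1)
        < gs p * ES p * hill_repression (As p) (x$2) * N_s p (x$1)"
      using pos x' by (intro mult_strict_left_mono N_s_strict_antimono mult_pos_pos
          hill_repression_pos) auto
    then show ?thesis
      using 2 eq by (simp add: G_nth sigma_nth)
  next
    case 3
    then have "y$2 < x$2"
      using prev by (simp add: sigma_nth)
    then have "hill_repression (As p) (x$2) * hill_repression (Az p) (x$4)
        < hill_repression (As p) (y$2) * hill_repression (Az p) (y$4)"
      using pos o y' by (intro mult_less_le_imp_less hill_repression_antimono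
          hill_repression_strict_antimono hill_repression_pos less_imp_le[OF hill_repression_pos]) auto
    then have "b200 p * E200 p * (hill_repression (As p) (x$2) * hill_repression (Az p) (x$4))
        < b200 p * E200 p * (hill_repression (As p) (y$2) * hill_repression (Az p) (y$4))"
      using pos by (intro mult_strict_left_mono) auto
    then show ?thesis
      using 3 eq by (simp add: G_nth sigma_nth mult.assoc)
  next
    case 4
    then have "x$3 < y$3"
      using prev by (simp add: sigma_nth)
    then have "N_z p (y$3) < N_z p (x$3)"
      using x' by (intro N_z_strict_antimono) auto
    moreover have "0 < hill_activation (As p) (y$2) * hill_activation (Az p) (y$4)"
      using pos y by (intro mult_pos_pos hill_activation_pos) (auto simp: less_imp_neq[symmetric])
    moreover have "hill_activation (As p) (y$2) * hill_activation (Az p) (y$4)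
        \<le> hill_activation (As p) (x$2) * hill_activation (Az p) (x$4)"
      using pos o y' by (intro mult_mono hill_activation_mono hill_activation_nonneg) auto
    moreover have "0 < N_z p (x$3)"
      using x' N_z_pos by blast
    ultimately have "hill_activation (As p) (y$2) * hill_activation (Az p) (y$4) * N_z p (y$3)
        < hill_activation (As p) (x$2) * hill_activation (Az p) (x$4) * N_z p (x$3)"
      by (meson mult_strict_left_mono mult_right_mono less_le_trans less_imp_le)
    then have "gz p * EZ p * (hill_activation (As p) (y$2) * hill_activation (Az p) (y$4) * N_z p (y$3))
        < gz p * EZ p * (hill_activation (As p) (x$2) * hill_activation (Az p) (x$4) * N_z p (x$3))"
      using pos by (intro mult_strict_left_mono) auto
    then show ?thesis
      using 4 eq by (simp add: G_nth sigma_nth mult.assoc)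
  qed
qed

lemma solution_positive:
  assumes ode: "\<And>\<tau>. \<tau> \<in> {0..t} \<Longrightarrow> (y has_vector_derivative G p (y \<tau>)) (at \<tau> within {0..t})"
    and init: "y 0 \<in> open_orthant" and \<tau>: "\<tau> \<in> {0..t}"
  shows "0 < y \<tau> $ j"
proof -
  have decay: "0 < y \<tau> $ j"
    if "\<And>x. x \<in> {0..\<tau>} \<Longrightarrow> - c * y x $ j \<le> G p (y x) $ j" and "\<tau> \<in> {0..t}" for j c \<tau>
  proof -
    have "exp (- c * (\<tau> - 0)) * y 0 $ j \<le> y \<tau> $ j"
    proof (rule differential_inequality_exp_lower_bound[where u' = "\<lambda>x. G p (y x) $ j"])
      fix x assume "x \<in> {0..\<tau>}"
      then show "((\<lambda>\<tau>. y \<tau> $ j) has_real_derivative G p (y x) $ j) (at x within {0..\<tau>})"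
        using \<open>\<tau> \<in> {0..t}\<close>
        by (intro DERIV_subset[OF has_real_derivative_component[OF ode]]) auto
    qed (use that in auto)
    moreover have "0 < y 0 $ j"
      using init by (simp add: open_orthant_def)
    ultimately show ?thesis
      by (smt (verit) exp_gt_zero mult_pos_pos)
  qed
  have mu_pos: "0 < y \<tau> $ j" if "j = 1 \<or> j = 3" "\<tau> \<in> {0..t}" for j \<tau>
  proof (rule decay[OF _ that(2), where c = "if j = 1 then bm34 p else bm200 p"])
    fix x
    show "- (if j = 1 then bm34 p else bm200 p) * y x $ j \<le> G p (y x) $ j"
      using that(1) pos
      by (auto simp: G_nth intro!: mult_nonneg_nonneg less_imp_le[OF hill_repression_pos])
  qed
  have sz_pos: "0 < y \<tau> $ j" if "j = 2 \<or> j = 4" for j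
  proof (rule decay[OF _ \<tau>, where c = "if j = 2 then kms p else kmz p"])
    fix x assume "x \<in> {0..\<tau>}"
    then have "0 < y x $ 1" "0 < y x $ 3"
      using mu_pos \<tau> by auto
    then show "- (if j = 2 then kms p else kmz p) * y x $ j \<le> G p (y x) $ j"
      using that pos
      by (auto simp: G_nth intro!: add_nonneg_nonneg mult_nonneg_nonneg hill_activation_nonneg
          less_imp_le[OF hill_repression_pos] less_imp_le[OF N_s_pos] less_imp_le[OF N_z_pos])
  qed
  show ?thesis
    using mu_pos[OF _ \<tau>] sz_pos exhaust_4[of j] by blast
qed

lemma lipschitz_on_G:
  assumes "bounded S" "\<And>x j. x \<in> S \<Longrightarrow> 0 \<le> x $ j"
  obtains L where "L-lipschitz_on S (G p)"
proof -
  have x: "bounded_lipschitz_on S (\<lambda>x. x $ j)" for j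
    using assms(1) by (rule bounded_lipschitz_on_component)
  have "bounded_lipschitz_on S (\<lambda>x. G p x $ i)" for i
    using exhaust_4[of i] pos x assms(2)
    by (auto simp: G_nth N_s_def N_z_def
        intro!: bounded_lipschitz_on_add bounded_lipschitz_on_diff bounded_lipschitz_on_mult
        bounded_lipschitz_on_const bounded_lipschitz_on_hill_repression
        bounded_lipschitz_on_hill_activation bounded_lipschitz_on_Nf)
  then have "\<forall>i. \<exists>L. L-lipschitz_on S (\<lambda>x. G p x $ i)"
    by (simp add: bounded_lipschitz_on_def)
  then obtain L where "\<And>i. (L i)-lipschitz_on S (\<lambda>x. G p x $ i)"
    by metis
  then show ?thesis
    using lipschitz_on_componentwise that by blast
qed

end

locale ordered_solutions = reduced_system +
  fixes t :: real and y1 y2 :: "real \<Rightarrow> real^4"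
  assumes t_pos: "0 < t"
    and ode1: "\<And>\<tau>. \<tau> \<in> {0..t} \<Longrightarrow> (y1 has_vector_derivative G p (y1 \<tau>)) (at \<tau> within {0..t})"
    and ode2: "\<And>\<tau>. \<tau> \<in> {0..t} \<Longrightarrow> (y2 has_vector_derivative G p (y2 \<tau>)) (at \<tau> within {0..t})"
    and init1: "y1 0 \<in> open_orthant" and init2: "y2 0 \<in> open_orthant"
    and init_ordered: "y1 0 - y2 0 \<in> C_sigma"
begin

text \<open>The difference of the two solutions in the coordinates in which \<open>C_sigma\<close> is the
  positive orthant.\<close>
definition w :: "real \<Rightarrow> 4 \<Rightarrow> real" where
  "w \<tau> i = sigma$i * (y1 \<tau> $ i - y2 \<tau> $ i)"

definition w' :: "real \<Rightarrow> 4 \<Rightarrow> real" where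
  "w' \<tau> i = sigma$i * (G p (y1 \<tau>) $ i - G p (y2 \<tau>) $ i)"

lemma w_has_derivative:
  "\<tau> \<in> {0..t} \<Longrightarrow> ((\<lambda>\<tau>. w \<tau> i) has_real_derivative w' \<tau> i) (at \<tau> within {0..t})"
  unfolding w_def w'_def
  using has_real_derivative_component[OF ode1] has_real_derivative_component[OF ode2]
  by (auto intro!: derivative_eq_intros)

lemma solutions_positive:
  assumes "\<tau> \<in> {0..t}"
  shows "0 < y1 \<tau> $ j" "0 < y2 \<tau> $ j"
  using solution_positive[where y = y1 and t = t, OF ode1 init1 assms]
    solution_positive[where y = y2 and t = t, OF ode2 init2 assms] by auto

lemma solutions_bounded:
  obtains R where "\<And>\<tau>. \<tau> \<in> {0..t} \<Longrightarrow> y1 \<tau> \<in> cbox 0 (\<chi> _. R) \<and> y2 \<tau> \<in> cbox 0 (\<chi> _. R)"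
proof -
  have "continuous_on {0..t} y1" "continuous_on {0..t} y2"
    using ode1 ode2 has_vector_derivative_continuous continuous_on_eq_continuous_within by blast+
  then have "bounded (y1 ` {0..t} \<union> y2 ` {0..t})"
    by (intro compact_imp_bounded compact_Un compact_continuous_image compact_Icc)
  then obtain R where R: "\<And>x. x \<in> y1 ` {0..t} \<union> y2 ` {0..t} \<Longrightarrow> norm x \<le> R"
    by (auto simp: bounded_iff)
  have box: "y \<in> cbox 0 (\<chi> _. R)" if "norm y \<le> R" "\<And>j. 0 < y $ j" for y :: "real^4"
    unfolding mem_box_cart
    using that component_le_norm_cart[of y] by (simp add: less_imp_le) (meson abs_ge_self order_trans)
  have "y1 \<tau> \<in> cbox 0 (\<chi> _. R) \<and> y2 \<tau> \<in> cbox 0 (\<chi> _. R)" if "\<tau> \<in> {0..t}" for \<tau>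
    using that by (intro conjI box R solutions_positive) auto
  then show ?thesis
    using that by blast
qed

lemma w'_lower_bound:
  obtains L where "0 \<le> L"
    "\<And>\<tau> i. \<tau> \<in> {0..t} \<Longrightarrow> - L * (\<bar>w \<tau> i\<bar> + (\<Sum>j\<in>UNIV. max 0 (- w \<tau> j))) \<le> w' \<tau> i"
proof -
  obtain R where R: "\<And>\<tau>. \<tau> \<in> {0..t} \<Longrightarrow> y1 \<tau> \<in> cbox 0 (\<chi> _. R) \<and> y2 \<tau> \<in> cbox 0 (\<chi> _. R)"
    using solutions_bounded by blast
  obtain L where L: "L-lipschitz_on (cbox 0 (\<chi> _. R)) (G p)"
    by (rule lipschitz_on_G[of "cbox 0 (\<chi> _. R)"]) (auto simp: mem_box_cart)
  have "- L * (\<bar>w \<tau> i\<bar> + (\<Sum>j\<in>UNIV. max 0 (- w \<tau> j))) \<le> w' \<tau> i"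
    if \<tau>: "\<tau> \<in> {0..t}" for \<tau> i
  proof -
    \<comment> \<open>\<open>P\<close> is \<open>y1\<close> with coordinate \<open>i\<close> and the coordinates in which \<open>y1\<close> lags behind
      \<open>y2\<close> replaced by those of \<open>y2\<close>: the Kamke condition compares \<open>P\<close> with \<open>y2\<close>, and
      the Lipschitz bound compares \<open>P\<close> with \<open>y1\<close>.\<close>
    define P where "P = (\<chi> j. if j \<noteq> i \<and> 0 \<le> w \<tau> j then y1 \<tau> $ j else y2 \<tau> $ j)"
    have P_nth: "P $ j = (if j \<noteq> i \<and> 0 \<le> w \<tau> j then y1 \<tau> $ j else y2 \<tau> $ j)" for j
      by (simp add: P_def)
    have kamke: "0 \<le> sigma$i * (G p P $ i - G p (y2 \<tau>) $ i)"
      using solutions_positive[OF \<tau>]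
      by (intro G_quasimonotone) (auto simp: P_nth C_sigma_def w_def less_imp_le)
    have "dist (y1 \<tau>) P \<le> \<bar>w \<tau> i\<bar> + (\<Sum>j\<in>UNIV. max 0 (- w \<tau> j))"
    proof -
      have "dist (y1 \<tau>) P \<le> (\<Sum>j\<in>UNIV. \<bar>y1 \<tau> $ j - P $ j\<bar>)"
        using norm_le_l1_cart[of "y1 \<tau> - P"] by (simp add: dist_norm)
      also have "\<dots> \<le> (\<Sum>j\<in>UNIV. (if j = i then \<bar>w \<tau> i\<bar> else 0) + max 0 (- w \<tau> j))"
        by (intro sum_mono) (auto simp: P_nth w_def abs_mult sigma_def)
      also have "\<dots> = \<bar>w \<tau> i\<bar> + (\<Sum>j\<in>UNIV. max 0 (- w \<tau> j))"
        by (simp add: sum.distrib)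
      finally show ?thesis .
    qed
    moreover have "P \<in> cbox 0 (\<chi> _. R)"
      using R[OF \<tau>] by (auto simp: mem_box_cart P_nth)
    ultimately have "\<bar>G p (y1 \<tau>) $ i - G p P $ i\<bar> \<le> L * (\<bar>w \<tau> i\<bar> + (\<Sum>j\<in>UNIV. max 0 (- w \<tau> j)))"
      using dist_vec_nth_le[of "G p (y1 \<tau>)" i "G p P"] lipschitz_onD[OF L, of "y1 \<tau>" P]
        mult_left_mono[OF _ lipschitz_on_nonneg[OF L]] R[OF \<tau>]
      by (smt (verit) dist_real_def)
    moreover have "- \<bar>G p (y1 \<tau>) $ i - G p P $ i\<bar> \<le> sigma $ i * (G p (y1 \<tau>) $ i - G p P $ i)"
      using abs_ge_minus_self[of "sigma $ i * (G p (y1 \<tau>) $ i - G p P $ i)"]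
      by (simp add: abs_mult abs_sigma)
    moreover have "w' \<tau> i = sigma $ i * (G p (y1 \<tau>) $ i - G p P $ i) + sigma $ i * (G p P $ i - G p (y2 \<tau>) $ i)"
      by (simp add: w'_def algebra_simps)
    ultimately show ?thesis
      using kamke by linarith
  qed
  then show ?thesis
    using that lipschitz_on_nonneg[OF L] by blast
qed

lemma w_nonneg:
  assumes "\<tau> \<in> {0..t}"
  shows "0 \<le> w \<tau> i"
proof -
  obtain L where "0 \<le> L"
    "\<And>\<tau> i. \<tau> \<in> {0..t} \<Longrightarrow> - L * (\<bar>w \<tau> i\<bar> + (\<Sum>j\<in>UNIV. max 0 (- w \<tau> j))) \<le> w' \<tau> i"
    by (rule w'_lower_bound) blast
  moreover have "0 \<le> w 0 j" for j
    using init_ordered by (simp add: C_sigma_def w_def)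
  ultimately show ?thesis
    using quasimonotone_differential_inequality_nonneg w_has_derivative assms by blast
qed

lemma w_persistent:
  assumes "\<tau>\<^sub>0 \<in> {0..t}" "0 < w \<tau>\<^sub>0 i" "\<tau> \<in> {\<tau>\<^sub>0..t}"
  shows "0 < w \<tau> i"
proof -
  obtain L where "0 \<le> L"
    "\<And>\<tau> i. \<tau> \<in> {0..t} \<Longrightarrow> - L * (\<bar>w \<tau> i\<bar> + (\<Sum>j\<in>UNIV. max 0 (- w \<tau> j))) \<le> w' \<tau> i"
    by (rule w'_lower_bound) blast
  moreover have "0 \<le> w 0 j" for j
    using w_nonneg t_pos by simp
  ultimately show ?thesis
    using quasimonotone_differential_inequality_persistent w_has_derivative assms by blast
qed

text \<open>Irreducibility: once coordinate \<open>i - 1\<close> of \<open>w\<close> is positive, coordinate \<open>i\<close> cannot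
  stay zero, since at a zero the strict Kamke condition makes its derivative positive.\<close>
lemma w_positive_propagates:
  assumes "0 \<le> a" "a < t" and prev: "\<And>\<tau>. \<tau> \<in> {a..t} \<Longrightarrow> 0 < w \<tau> (i - 1)"
    and \<tau>: "\<tau> \<in> {(a + t) / 2..t}"
  shows "0 < w \<tau> i"
proof -
  define m where "m = (a + t) / 2"
  have "\<exists>\<tau>\<^sub>1 \<in> {a..m}. w \<tau>\<^sub>1 i \<noteq> 0"
  proof (rule ccontr)
    assume "\<not> ?thesis"
    then have zero: "w x i = 0" if "x \<in> {a..m}" for x
      using that by blast
    define c where "c = (a + m) / 2"
    have c: "a < c" "c < m" "m < t"
      using assms by (auto simp: c_def m_def)
    have "((\<lambda>\<tau>. w \<tau> i) has_real_derivative w' c i) (at c)"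
      using w_has_derivative[of c i] c \<open>0 \<le> a\<close> by (simp add: at_within_Icc_at)
    moreover have "w c i = w y i" if "\<bar>c - y\<bar> < c - a" for y
    proof -
      have "y \<in> {a..m}"
        using that unfolding c_def abs_less_iff by (simp add: field_simps)
      then show ?thesis
        using c zero by simp
    qed
    ultimately have "w' c i = 0"
      using c by (intro DERIV_local_const[where d = "c - a"]) auto
    moreover have "0 < w' c i"
      unfolding w'_def
    proof (rule G_strictly_quasimonotone)
      show "0 < y1 c $ j" "0 < y2 c $ j" for j
        using solutions_positive[of c] c \<open>0 \<le> a\<close> by auto
      show "y1 c - y2 c \<in> C_sigma"
        using w_nonneg[of c] c \<open>0 \<le> a\<close> by (auto simp: C_sigma_def w_def)
      show "y1 c $ i = y2 c $ i"
        using zero[of c] c by (simp add: w_def sigma_def split: if_splits)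
      show "0 < sigma $ (i - 1) * (y1 c $ (i - 1) - y2 c $ (i - 1))"
        using prev[of c] c by (simp add: w_def)
    qed
    ultimately show False
      by simp
  qed
  then obtain \<tau>\<^sub>1 where "\<tau>\<^sub>1 \<in> {a..m}" "w \<tau>\<^sub>1 i \<noteq> 0"
    by blast
  moreover have "m \<le> t"
    using assms by (simp add: m_def)
  ultimately show ?thesis
    using w_nonneg[of \<tau>\<^sub>1 i] w_persistent[of \<tau>\<^sub>1 i \<tau>] \<tau> assms by (auto simp: m_def)
qed

lemma w_positive_at_end:
  assumes "y1 0 \<noteq> y2 0"
  shows "0 < w t i"
proof -
  obtain i\<^sub>0 where "y1 0 $ i\<^sub>0 \<noteq> y2 0 $ i\<^sub>0"
    using assms by (auto simp: vec_eq_iff)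
  then have "w 0 i\<^sub>0 \<noteq> 0"
    by (simp add: w_def sigma_def)
  then have "0 < w 0 i\<^sub>0"
    using w_nonneg[of 0 i\<^sub>0] t_pos by simp
  have "\<exists>a. 0 \<le> a \<and> a < t \<and> (\<forall>\<tau> \<in> {a..t}. 0 < w \<tau> (i\<^sub>0 + of_nat k))" for k
  proof (induction k)
    case 0
    show ?case
      using \<open>0 < w 0 i\<^sub>0\<close> w_persistent[of 0 i\<^sub>0] t_pos by auto
  next
    case (Suc k)
    then obtain a where "0 \<le> a" "a < t" "\<forall>\<tau> \<in> {a..t}. 0 < w \<tau> (i\<^sub>0 + of_nat k)"
      by blast
    moreover have "i\<^sub>0 + of_nat (Suc k) - 1 = i\<^sub>0 + of_nat k"
      by simp
    ultimately show ?case
      using w_positive_propagates[of a "i\<^sub>0 + of_nat (Suc k)"]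
      by (intro exI[of _ "(a + t) / 2"]) auto
  qed
  moreover obtain k :: nat where "i = i\<^sub>0 + of_nat k"
    using exhaust_4[of "i - i\<^sub>0"]
    by (metis add_diff_cancel_left' diff_add_cancel of_nat_1 of_nat_numeral)
  ultimately obtain a where "a < t" "\<forall>\<tau> \<in> {a..t}. 0 < w \<tau> i"
    by blast
  then show ?thesis
    by simp
qed

end

theorem mainTheorem4:
  fixes p :: params
  assumes pos: "As p > 0" "Az p > 0" "E34 p > 0" "E200 p > 0" "ES p > 0" "EZ p > 0"
    "b34 p > 0" "bm34 p > 0" "b200 p > 0" "bm200 p > 0" "gs p > 0" "gz p > 0"
    "cs p > 0" "cms p > 0" "cz p > 0" "cmz p > 0"
    "bs p > 0" "bs1 p > 0" "bs2 p > 0" "bz p > 0" "bz1 p > 0" "bz2 p > 0"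
    "ks p > 0" "ks1 p > 0" "ks2 p > 0" "kms p > 0"
    "kz p > 0" "kz1 p > 0" "kz2 p > 0" "kmz p > 0" "dz p > 0"
  and ord_s: "bs p < bs1 p" "bs1 p < bs2 p"
  and ord_z: "bz p < bz1 p" "bz1 p < bz2 p"
  and ordk_s: "ks p > ks1 p" "ks1 p > ks2 p"
  and ordk_z: "kz p > kz1 p" "kz1 p > kz2 p"
  shows "\<forall>t > 0. \<forall>y1 y2 :: real \<Rightarrow> real^4.
      (\<forall>\<tau>\<in>{0..t}. (y1 has_vector_derivative G p (y1 \<tau>)) (at \<tau> within {0..t})) \<and>
      (\<forall>\<tau>\<in>{0..t}. (y2 has_vector_derivative G p (y2 \<tau>)) (at \<tau> within {0..t})) \<and>
      y1 0 \<in> open_orthant \<and> y2 0 \<in> open_orthant \<and>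
      y1 0 - y2 0 \<in> C_sigma \<and> y1 0 \<noteq> y2 0
      \<longrightarrow> y1 t - y2 t \<in> interior C_sigma"
proof (intro allI impI, elim conjE)
  fix t :: real and y1 y2 :: "real \<Rightarrow> real^4"
  assume "0 < t" "\<forall>\<tau>\<in>{0..t}. (y1 has_vector_derivative G p (y1 \<tau>)) (at \<tau> within {0..t})"
    "\<forall>\<tau>\<in>{0..t}. (y2 has_vector_derivative G p (y2 \<tau>)) (at \<tau> within {0..t})"
    "y1 0 \<in> open_orthant" "y2 0 \<in> open_orthant" "y1 0 - y2 0 \<in> C_sigma" and "y1 0 \<noteq> y2 0"
  then interpret ordered_solutions p t y1 y2
    using assms by unfold_locales auto
  show "y1 t - y2 t \<in> interior C_sigma"
    using w_positive_at_end[OF \<open>y1 0 \<noteq> y2 0\<close>] by (intro mem_interior_C_sigma) (simp add: w_def)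
qed

end
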